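(* Let $G$ be a graph, $k\ge1$ an integer, and $G_k$ the graph obtained from $G$ by cloning each vertex exactly $k-1$ times. Then, as polynomials, $$P(G_k;u,x)=P\big(G;u,(1+x)^k-1\big),$$ and consequently $$q(G_k;x,y)=q\Big(G;(x-1)\frac{y^k-1}{y-1}+1,\;y^k\Big).$$
   Context: All graphs are finite and undirected, without multiple edges but possibly with self loops. For $A\subseteq V$, $G[A]$ is the induced subgraph; $rk(G)$ is the $\mathbb{F}_2$-rank of the adjacency matrix $(m_{ij})$ ($m_{ij}=1$ iff $\{i,j\}\in E$; $m_{ii}=1$ iff $i$ has a self loop; empty graph: rank $0$). $q(G;x,y)=\sum_{A\subseteq V}(x-1)^{rk(G[A])}(y-1)^{|A|-rk(G[A])}$ and $P(G;u,x)=\sum_{A\subseteq V}x^{|A|}u^{rk(G[A])}$, with $0^0=1$; here $\frac{y^k-1}{y-1}=1+y+\dots+y^{k-1}$. The graph $G_k$ has vertex set $\{a_i: a\in V,\ 1\le i\le k\}$; for distinct $a,b\in V$, $a_i$ and $b_j$ are adjacent iff $\{a,b\}\in E$; $a_i,a_j$ are adjacent (for $i=j$: $a_i$ has a self loop) iff $a$ has a self loop in $G$. *)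

theory Defs
  imports "Jordan_Normal_Form.DL_Rank" "HOL-Library.Z2"
begin

text \<open>A graph is given by a finite vertex set V and a symmetric adjacency
relation E (E a a means that a carries a self loop). The field F_2 is the
type bit from HOL-Library.Z2.\<close>

definition graph :: "'a set \<Rightarrow> ('a \<Rightarrow> 'a \<Rightarrow> bool) \<Rightarrow> bool" where
  "graph V E \<longleftrightarrow> finite V \<and> (\<forall>a\<in>V. \<forall>b\<in>V. E a b = E b a)"

text \<open>An enumeration of a finite vertex set (the rank does not depend on it).\<close>
definition enum_set :: "'a set \<Rightarrow> 'a list" where
  "enum_set A = (SOME xs. set xs = A \<and> distinct xs)"

definition adj_mat :: "('a \<Rightarrow> 'a \<Rightarrow> bool) \<Rightarrow> 'a list \<Rightarrow> bit mat" where
  "adj_mat E xs = mat (length xs) (length xs)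
     (\<lambda>(i, j). if E (xs ! i) (xs ! j) then 1 else 0)"

definition rk :: "('a \<Rightarrow> 'a \<Rightarrow> bool) \<Rightarrow> 'a set \<Rightarrow> nat" where
  "rk E A = vec_space.rank (card A) (adj_mat E (enum_set A))"

definition P_poly :: "'a set \<Rightarrow> ('a \<Rightarrow> 'a \<Rightarrow> bool) \<Rightarrow> 'r::comm_ring_1 \<Rightarrow> 'r \<Rightarrow> 'r" where
  "P_poly V E u x = (\<Sum>A\<in>Pow V. x ^ card A * u ^ rk E A)"

definition q_poly :: "'a set \<Rightarrow> ('a \<Rightarrow> 'a \<Rightarrow> bool) \<Rightarrow> 'r::comm_ring_1 \<Rightarrow> 'r \<Rightarrow> 'r" where
  "q_poly V E x y = (\<Sum>A\<in>Pow V. (x - 1) ^ rk E A * (y - 1) ^ (card A - rk E A))"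

text \<open>The cloned graph G_k: vertex a_i is represented as the pair (a, i).\<close>
definition clone_V :: "'a set \<Rightarrow> nat \<Rightarrow> ('a \<times> nat) set" where
  "clone_V V k = V \<times> {1..k}"

definition clone_E :: "('a \<Rightarrow> 'a \<Rightarrow> bool) \<Rightarrow> ('a \<times> nat) \<Rightarrow> ('a \<times> nat) \<Rightarrow> bool" where
  "clone_E E p p' = (let (a, i) = p; (b, j) = p' in
      if a \<noteq> b then E a b else E a a)"

end

theory Submission
  imports Defs
begin

(* The proof rests on two observations about a vertex subset A of G_k = G x K:
   (1) rank: the adjacency matrix of G_k[A] arises from that of G[fst A] by
       repeating rows and columns, so rk(G_k[A]) = rk(G[fst A]).  Linear algebra
       first: reindexing coordinates along a surjection is an injective linear map,
       so it preserves linear dependence of columns and hence the rank.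
   (2) counting: the sets A with given projection B correspond to the choices of
       a nonempty fibre S_a of K for every a in B; summing w^(|A| - |B|) over them
       factorises into (sum over nonempty S of w^(|S|-1))^|B| = (sum_{i<|K|} (1+w)^i)^|B|.
   Both identities then follow by splitting each summand according to fst A; the
   statements hold for any finite set K of copies. *)

definition reindex_vec :: "nat \<Rightarrow> (nat \<Rightarrow> nat) \<Rightarrow> 'a vec \<Rightarrow> 'a vec" where
  "reindex_vec n \<sigma> v = vec n (\<lambda>i. v $ \<sigma> i)"

lemma reindex_vec_carrier [simp]: "reindex_vec n \<sigma> v \<in> carrier_vec n"
  and dim_reindex_vec [simp]: "dim_vec (reindex_vec n \<sigma> v) = n"
  unfolding reindex_vec_def by simp_all

lemma reindex_vec_zero:
  assumes "\<sigma> ` {..<n} \<subseteq> {..<m}"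
  shows "reindex_vec n \<sigma> (0\<^sub>v m) = 0\<^sub>v n"
  using assms unfolding reindex_vec_def by (intro eq_vecI) auto

lemma reindex_vec_inj:
  assumes sig: "\<sigma> ` {..<n} = {..<m}"
  shows "inj_on (reindex_vec n \<sigma>) (carrier_vec m)"
proof (rule inj_onI)
  fix v w :: "'a vec"
  assume v: "v \<in> carrier_vec m" and w: "w \<in> carrier_vec m"
    and eq: "reindex_vec n \<sigma> v = reindex_vec n \<sigma> w"
  show "v = w"
  proof (rule eq_vecI)
    fix b assume "b < dim_vec w"
    then obtain i where "i < n" "b = \<sigma> i" using w sig by (metis carrier_vecD imageE lessThan_iff)
    then show "v $ b = w $ b" using arg_cong[OF eq, of "\<lambda>u. u $ i"] by (simp add: reindex_vec_def)
  qed (use v w in auto)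
qed

(* Reindexing commutes with linear combinations (on sets where it is injective,
   so that coefficients can be transported along it). *)
lemma reindex_vec_lincomb:
  fixes c :: "'a::field vec \<Rightarrow> 'a"
  assumes sig: "\<sigma> ` {..<n} \<subseteq> {..<m}" and fin: "finite A" and A: "A \<subseteq> carrier_vec m"
    and inj: "inj_on (reindex_vec n \<sigma>) A"
  shows "module.lincomb (module_vec TYPE('a) n) c (reindex_vec n \<sigma> ` A)
       = reindex_vec n \<sigma> (module.lincomb (module_vec TYPE('a) m) (c \<circ> reindex_vec n \<sigma>) A)"
proof -
  interpret N: vec_space "TYPE('a)" n .
  interpret M: vec_space "TYPE('a)" m .
  define L :: "'a vec \<Rightarrow> 'a vec" where "L = reindex_vec n \<sigma>"
  have "N.lincomb c (L ` A) = L (M.lincomb (c \<circ> L) A)"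
  proof (rule eq_vecI)
    fix i assume "i < dim_vec (L (M.lincomb (c \<circ> L) A))"
    then have i: "i < n" by (simp add: L_def)
    have "N.lincomb c (L ` A) $ i = (\<Sum>y\<in>L ` A. c y * y $ i)"
      using i by (subst N.lincomb_index) (auto simp: L_def)
    also have "\<dots> = (\<Sum>x\<in>A. c (L x) * x $ \<sigma> i)"
      using i inj unfolding L_def by (simp add: sum.reindex) (simp add: reindex_vec_def)
    also have "\<dots> = M.lincomb (c \<circ> L) A $ \<sigma> i"
      using i sig A by (subst M.lincomb_index) auto
    finally show "N.lincomb c (L ` A) $ i = L (M.lincomb (c \<circ> L) A) $ i"
      using i by (simp add: L_def reindex_vec_def)
  qed (use fin in \<open>simp add: N.lincomb_dim image_subset_iff L_def\<close>)
  then show ?thesis unfolding L_def .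
qed

lemma lin_dep_reindex_vec:
  fixes T :: "'a::field vec set"
  assumes sig: "\<sigma> ` {..<n} = {..<m}" and fin: "finite T" and T: "T \<subseteq> carrier_vec m"
  shows "module.lin_dep class_ring (module_vec TYPE('a) n) (reindex_vec n \<sigma> ` T)
     \<longleftrightarrow> module.lin_dep class_ring (module_vec TYPE('a) m) T"
proof -
  interpret N: vec_space "TYPE('a)" n .
  interpret M: vec_space "TYPE('a)" m .
  define L :: "'a vec \<Rightarrow> 'a vec" where "L = reindex_vec n \<sigma>"
  have inj: "inj_on L T" using reindex_vec_inj[OF sig] T inj_on_subset unfolding L_def by blast
  have lincomb: "N.lincomb c (L ` T) = L (M.lincomb (c \<circ> L) T)" for c
    using reindex_vec_lincomb[OF _ fin T] inj sig unfolding L_def by simp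
  have L0: "L (0\<^sub>v m) = 0\<^sub>v n" using reindex_vec_zero sig unfolding L_def by blast
  have LT: "L ` T \<subseteq> carrier_vec n" by (auto simp: L_def)
  show ?thesis unfolding L_def[symmetric]
  proof
    assume "N.lin_dep (L ` T)"
    then obtain c w where c: "N.lincomb c (L ` T) = 0\<^sub>v n" and w: "w \<in> L ` T" "c w \<noteq> 0"
      using N.finite_lin_dep[OF finite_imageI[OF fin] _ LT] by (auto simp: module_vec_simps class_ring_simps)
    have "L (M.lincomb (c \<circ> L) T) = L (0\<^sub>v m)"
      using c lincomb L0 by simp
    then have "M.lincomb (c \<circ> L) T = 0\<^sub>v m"
      using inj_onD[OF reindex_vec_inj[OF sig]] M.lincomb_dim[OF fin T] unfolding L_def
      by (metis carrier_vec_dim_vec zero_carrier_vec)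
    moreover obtain v where "v \<in> T" "w = L v" using w by blast
    ultimately show "M.lin_dep T"
      using w by (intro M.lin_dep_crit[OF fin subset_refl, where a = "c \<circ> L" and v = v])
        (auto simp: module_vec_simps class_ring_simps)
  next
    assume "M.lin_dep T"
    then obtain a v where a: "M.lincomb a T = 0\<^sub>v m" and v: "v \<in> T" "a v \<noteq> 0"
      using M.finite_lin_dep[OF fin _ T] by (auto simp: module_vec_simps class_ring_simps)
    define c where "c = a \<circ> the_inv_into T L"
    have "M.lincomb (c \<circ> L) T = M.lincomb a T"
      using T by (intro M.lincomb_cong) (auto simp: c_def the_inv_into_f_f[OF inj])
    then have "N.lincomb c (L ` T) = 0\<^sub>v n"
      using a lincomb L0 by simp
    then show "N.lin_dep (L ` T)"
      using v by (intro N.lin_dep_crit[OF finite_imageI[OF fin] subset_refl, where a = c and v = "L v"])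
        (auto simp: c_def the_inv_into_f_f[OF inj] module_vec_simps class_ring_simps)
  qed
qed

lemma (in vec_space) rank_attained:
  assumes "A \<in> carrier_mat n nc"
  obtains S where "S \<subseteq> set (cols A)" "lin_indpt S" "rank A = card S"
proof -
  have "lin_indpt {}" by (simp add: lin_dep_def)
  then obtain S where "maximal S (\<lambda>T. T \<subseteq> set (cols A) \<and> lin_indpt T)"
    using maximal_exists_superset[of "set (cols A)" "\<lambda>T. T \<subseteq> set (cols A) \<and> lin_indpt T" "{}"]
    by auto
  then show thesis
    using that rank_card_indpt[OF assms] unfolding maximal_def by blast
qed

(* Repeating rows and columns of a square matrix along a surjection sigma
   does not change its rank: the column set is mapped bijectively and
   independence is preserved in both directions. *)
lemma rank_reindex:
  fixes g :: "nat \<Rightarrow> nat \<Rightarrow> 'a::field"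
  assumes sig: "\<sigma> ` {..<n} = {..<m}"
  shows "vec_space.rank n (mat n n (\<lambda>(i, j). g (\<sigma> i) (\<sigma> j)))
       = vec_space.rank m (mat m m (\<lambda>(i, j). g i j))"
proof -
  interpret N: vec_space "TYPE('a)" n .
  interpret M: vec_space "TYPE('a)" m .
  define L :: "'a vec \<Rightarrow> 'a vec" where "L = reindex_vec n \<sigma>"
  define MA where "MA = mat n n (\<lambda>(i, j). g (\<sigma> i) (\<sigma> j))"
  define MB where "MB = mat m m (\<lambda>(i, j). g i j)"
  have MA: "MA \<in> carrier_mat n n" and MB: "MB \<in> carrier_mat m m"
    unfolding MA_def MB_def by simp_all
  have CB: "set (cols MB) \<subseteq> carrier_vec m" using MB cols_dim by blast
  have inj: "inj_on L (set (cols MB))"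
    using reindex_vec_inj[OF sig] CB inj_on_subset unfolding L_def by blast
  have sigm: "\<sigma> i < m" if "i < n" for i using sig that by auto
  have colA: "col MA j = L (col MB (\<sigma> j))" if "j < n" for j
    using that sigm unfolding MA_def MB_def L_def reindex_vec_def by (intro eq_vecI) auto
  have "set (cols MA) = (\<lambda>j. col MA j) ` {..<n}"
    unfolding MA_def by (simp add: cols_def atLeast0LessThan)
  also have "\<dots> = L ` (\<lambda>b. col MB b) ` \<sigma> ` {..<n}"
    using colA by (simp add: image_image)
  also have "\<dots> = L ` set (cols MB)"
    unfolding sig MB_def by (simp add: cols_def atLeast0LessThan)
  finally have colsA: "set (cols MA) = L ` set (cols MB)" .
  have indpt: "N.lin_indpt (L ` U) \<longleftrightarrow> M.lin_indpt U" if "U \<subseteq> set (cols MB)" for U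
    using lin_dep_reindex_vec[OF sig, of U] that CB finite_subset unfolding L_def by blast
  show ?thesis unfolding MA_def[symmetric] MB_def[symmetric]
  proof (rule antisym)
    obtain S where S: "S \<subseteq> set (cols MA)" "N.lin_indpt S" "N.rank MA = card S"
      using N.rank_attained[OF MA] .
    obtain U where UB: "U \<subseteq> set (cols MB)" and SU: "S = L ` U"
      using S(1) unfolding colsA subset_image_iff by blast
    have "card S = card U" unfolding SU using inj_on_subset[OF inj UB] by (rule card_image)
    moreover have "M.lin_indpt U" using S(2) indpt[OF UB] unfolding SU by blast
    ultimately show "N.rank MA \<le> M.rank MB"
      using M.rank_ge_card_indpt[OF MB UB] S(3) by simp
  next
    obtain U where U: "U \<subseteq> set (cols MB)" "M.lin_indpt U" "M.rank MB = card U"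
      using M.rank_attained[OF MB] .
    have "card (L ` U) = card U" using inj_on_subset[OF inj U(1)] by (rule card_image)
    moreover have "N.lin_indpt (L ` U)" using U(2) indpt[OF U(1)] by blast
    moreover have "L ` U \<subseteq> set (cols MA)" using U(1) colsA by blast
    ultimately show "M.rank MB \<le> N.rank MA"
      using N.rank_ge_card_indpt[OF MA] U(3) by metis
  qed
qed

lemma enum_set:
  assumes "finite A"
  shows "set (enum_set A) = A" and "distinct (enum_set A)" and "length (enum_set A) = card A"
proof -
  have "set (enum_set A) = A \<and> distinct (enum_set A)"
    unfolding enum_set_def by (rule someI_ex) (rule finite_distinct_list[OF assms])
  then show "set (enum_set A) = A" and "distinct (enum_set A)" and "length (enum_set A) = card A"
    using distinct_card by metis+
qed

(* The rank of G[A] is at most |A|; needed to split the exponent |A| - rk in q. *)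
lemma rk_le_card:
  assumes "finite A"
  shows "rk E A \<le> card A"
proof -
  interpret vec_space "TYPE(bit)" "card A" .
  have "adj_mat E (enum_set A) \<in> carrier_mat (card A) (card A)"
    unfolding adj_mat_def enum_set(3)[OF assms] by simp
  then show ?thesis unfolding rk_def by (rule rank_le_nc)
qed

(* If the adjacency on A is pulled back from E along f, the rank of the induced
   subgraph equals that of G[f A]: the adjacency matrix of A is the one of f A
   with rows and columns repeated, via the index map i |-> position of f (xs ! i). *)
lemma rk_pullback:
  assumes fin: "finite A" and E': "\<And>p q. p \<in> A \<Longrightarrow> q \<in> A \<Longrightarrow> E' p q = E (f p) (f q)"
  shows "rk E' A = rk E (f ` A)"
proof -
  define xs where "xs = enum_set A"
  define ys where "ys = enum_set (f ` A)"
  have fin_image: "finite (f ` A)" using fin by simp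
  note xs = enum_set[OF fin, folded xs_def] and ys = enum_set[OF fin_image, folded ys_def]
  define n where "n = card A"
  define m where "m = card (f ` A)"
  define \<sigma> where "\<sigma> i = find_first (f (xs ! i)) ys" for i
  have \<sigma>: "\<sigma> i < m" "ys ! \<sigma> i = f (xs ! i)" if "i < n" for i
  proof -
    have "f (xs ! i) \<in> set ys" using that xs ys unfolding n_def by auto
    then show "\<sigma> i < m" "ys ! \<sigma> i = f (xs ! i)"
      unfolding \<sigma>_def m_def using find_first_le nth_find_first ys(3) by metis+
  qed
  have onto: "\<sigma> ` {..<n} = {..<m}"
  proof
    show "{..<m} \<subseteq> \<sigma> ` {..<n}"
    proof
      fix b assume "b \<in> {..<m}"
      then have b: "b < length ys" using ys(3) m_def by simp
      then obtain i where i: "i < n" "f (xs ! i) = ys ! b"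
        using nth_mem[OF b] xs ys unfolding n_def by (auto simp: in_set_conv_nth)
      then have "\<sigma> i = b" unfolding \<sigma>_def using find_first_unique[OF ys(2) b] by simp
      then show "b \<in> \<sigma> ` {..<n}" using i by auto
    qed
  qed (use \<sigma> in auto)
  define g where "g b c = (if E (ys ! b) (ys ! c) then 1 else (0::bit))" for b c
  have "adj_mat E' xs = mat n n (\<lambda>(i, j). g (\<sigma> i) (\<sigma> j))"
    unfolding adj_mat_def g_def using xs E' \<sigma>(2) unfolding n_def
    by (intro eq_matI) auto
  moreover have "adj_mat E ys = mat m m (\<lambda>(i, j). g i j)"
    unfolding adj_mat_def g_def m_def ys(3) by simp
  ultimately show ?thesis
    unfolding rk_def xs_def[symmetric] ys_def[symmetric] n_def[symmetric] m_def[symmetric]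
    using rank_reindex[OF onto, of g] by simp
qed

lemma sum_Pow_power_card:
  fixes x :: "'r::comm_semiring_1"
  assumes "finite K"
  shows "(\<Sum>S\<in>Pow K. x ^ card S) = (1 + x) ^ card K"
proof -
  have "(1 + x) ^ card K = (\<Prod>a\<in>K. x + 1)" by (simp add: add.commute)
  also have "\<dots> = (\<Sum>S\<in>Pow K. (\<Prod>a\<in>S. x) * (\<Prod>a\<in>K - S. 1))"
    using assms by (rule prod_add)
  finally show ?thesis by simp
qed

(* Weighting each nonempty S by w^(|S|-1) gives 1 + (1+w) + ... + (1+w)^(|K|-1);
   multiplied by w this is (1+w)^|K| - 1, the sum over nonempty S of w^|S|. *)
lemma sum_nonempty_Pow_power_card:
  fixes w :: "'r::comm_semiring_1"
  assumes "finite K"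
  shows "(\<Sum>S\<in>Pow K - {{}}. w ^ (card S - 1)) = (\<Sum>i<card K. (1 + w) ^ i)"
  using assms
proof (induction K rule: finite_induct)
  case (insert a K)
  have inj: "inj_on (insert a) (Pow K)"
    using insert.hyps(2) by (intro inj_onI) (metis PowD insert_ident subsetD)
  have split: "Pow (insert a K) - {{}} = (Pow K - {{}}) \<union> insert a ` Pow K"
    by (auto simp: Pow_insert)
  have "(\<Sum>S\<in>Pow (insert a K) - {{}}. w ^ (card S - 1))
      = (\<Sum>S\<in>Pow K - {{}}. w ^ (card S - 1)) + (\<Sum>S\<in>insert a ` Pow K. w ^ (card S - 1))"
    unfolding split using insert.hyps by (intro sum.union_disjoint) auto
  also have "(\<Sum>S\<in>insert a ` Pow K. w ^ (card S - 1)) = (\<Sum>S\<in>Pow K. w ^ (card (insert a S) - 1))"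
    by (simp add: sum.reindex[OF inj])
  also have "(\<Sum>S\<in>Pow K. w ^ (card (insert a S) - 1)) = (\<Sum>S\<in>Pow K. w ^ card S)"
    using insert.hyps by (intro sum.cong refl) (auto simp: finite_subset card_insert_if)
  finally show ?case
    using insert.IH insert.hyps sum_Pow_power_card[OF insert.hyps(1), of w] by simp
qed simp

(* The subsets A of B x K projecting onto B are the sets Sigma B f with f a
   nonempty subset of K for each a in B; |A| - |B| = sum of (|f a| - 1). *)
lemma sum_fibre_fst:
  fixes w :: "'r::comm_semiring_1"
  assumes finB: "finite B" and finK: "finite K"
  shows "(\<Sum>A | A \<subseteq> B \<times> K \<and> fst ` A = B. w ^ (card A - card B))
       = (\<Sum>S\<in>Pow K - {{}}. w ^ (card S - 1)) ^ card B"
proof -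
  let ?P = "PiE B (\<lambda>_. Pow K - {{}})"
  have bij: "bij_betw (Sigma B) ?P {A. A \<subseteq> B \<times> K \<and> fst ` A = B}"
  proof (rule bij_betwI[where g = "\<lambda>A. restrict (\<lambda>a. A `` {a}) B"])
    show "Sigma B \<in> ?P \<rightarrow> {A. A \<subseteq> B \<times> K \<and> fst ` A = B}"
    proof
      fix f assume f: "f \<in> ?P"
      have "fst ` Sigma B f = B"
      proof
        show "B \<subseteq> fst ` Sigma B f"
        proof
          fix a assume a: "a \<in> B"
          then obtain i where "i \<in> f a" using f by (auto simp: PiE_iff)
          with a show "a \<in> fst ` Sigma B f" by (metis SigmaI fst_conv image_eqI)
        qed
      qed auto
      moreover have "Sigma B f \<subseteq> B \<times> K" using f by (auto simp: PiE_iff)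
      ultimately show "Sigma B f \<in> {A. A \<subseteq> B \<times> K \<and> fst ` A = B}" by blast
    qed
    show "(\<lambda>A. restrict (\<lambda>a. A `` {a}) B) \<in> {A. A \<subseteq> B \<times> K \<and> fst ` A = B} \<rightarrow> ?P"
    proof
      fix A assume A: "A \<in> {A. A \<subseteq> B \<times> K \<and> fst ` A = B}"
      have "A `` {a} \<in> Pow K - {{}}" if "a \<in> B" for a
        using A that by (auto simp: Image_singleton_iff)
      then show "restrict (\<lambda>a. A `` {a}) B \<in> ?P" by (simp add: PiE_iff)
    qed
  next
    fix f assume f: "f \<in> ?P"
    show "restrict (\<lambda>a. Sigma B f `` {a}) B = f"
    proof
      fix a show "restrict (\<lambda>a. Sigma B f `` {a}) B a = f a"
        using PiE_arb[OF f] by (cases "a \<in> B") auto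
    qed
  next
    fix A assume "A \<in> {A. A \<subseteq> B \<times> K \<and> fst ` A = B}"
    then have "A \<subseteq> B \<times> K" by blast
    then show "Sigma B (restrict (\<lambda>a. A `` {a}) B) = A" by (auto simp: Image_singleton_iff)
  qed
  have card: "card (Sigma B f) - card B = (\<Sum>a\<in>B. card (f a) - 1)" if f: "f \<in> ?P" for f
  proof -
    have fin: "finite (f a)" and pos: "1 \<le> card (f a)" if "a \<in> B" for a
      using f that finK by (auto simp: PiE_iff finite_subset Suc_le_eq card_gt_0_iff)
    have "card (Sigma B f) = (\<Sum>a\<in>B. card (f a))" using finB fin by (simp add: card_SigmaI)
    then show ?thesis using pos by (simp add: sum_subtractf_nat)
  qed
  have "(\<Sum>A | A \<subseteq> B \<times> K \<and> fst ` A = B. w ^ (card A - card B))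
      = (\<Sum>f\<in>?P. w ^ (card (Sigma B f) - card B))"
    by (rule sum.reindex_bij_betw[OF bij, of "\<lambda>A. w ^ (card A - card B)", symmetric])
  also have "\<dots> = (\<Sum>f\<in>?P. \<Prod>a\<in>B. w ^ (card (f a) - 1))"
    using card by (simp add: power_sum)
  also have "\<dots> = (\<Prod>a\<in>B. \<Sum>S\<in>Pow K - {{}}. w ^ (card S - 1))"
    using finB finK by (intro prod_sum_PiE[symmetric]) auto
  finally show ?thesis by simp
qed

lemma sum_Pow_product_by_fst:
  fixes F :: "'a set \<Rightarrow> 'r::comm_semiring_1" and w :: 'r
  assumes finV: "finite V" and finK: "finite K"
  shows "(\<Sum>A\<in>Pow (V \<times> K). F (fst ` A) * w ^ (card A - card (fst ` A)))
       = (\<Sum>B\<in>Pow V. F B * (\<Sum>i<card K. (1 + w) ^ i) ^ card B)"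
proof -
  have fibre: "{A \<in> Pow (V \<times> K). fst ` A = B} = {A. A \<subseteq> B \<times> K \<and> fst ` A = B}"
    if "B \<subseteq> V" for B using that by force
  have "(\<Sum>A\<in>Pow (V \<times> K). F (fst ` A) * w ^ (card A - card (fst ` A)))
      = (\<Sum>B\<in>Pow V. \<Sum>A\<in>{A \<in> Pow (V \<times> K). fst ` A = B}. F (fst ` A) * w ^ (card A - card (fst ` A)))"
    using finV finK by (intro sum.group[symmetric]) force+
  also have "\<dots> = (\<Sum>B\<in>Pow V. F B * (\<Sum>A | A \<subseteq> B \<times> K \<and> fst ` A = B. w ^ (card A - card B)))"
  proof (rule sum.cong[OF refl])
    fix B assume "B \<in> Pow V"
    then show "(\<Sum>A\<in>{A \<in> Pow (V \<times> K). fst ` A = B}. F (fst ` A) * w ^ (card A - card (fst ` A)))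
        = F B * (\<Sum>A | A \<subseteq> B \<times> K \<and> fst ` A = B. w ^ (card A - card B))"
      unfolding sum_distrib_left fibre[OF PowD] by (intro sum.cong) force+
  qed
  also have "\<dots> = (\<Sum>B\<in>Pow V. F B * (\<Sum>S\<in>Pow K - {{}}. w ^ (card S - 1)) ^ card B)"
    using finV finK by (intro sum.cong refl) (simp add: sum_fibre_fst finite_subset)
  finally show ?thesis unfolding sum_nonempty_Pow_power_card[OF finK] .
qed

lemma clone_E_pullback: "clone_E E p q = E (fst p) (fst q)"
  unfolding clone_E_def by (cases p; cases q) auto

lemma rk_clone:
  assumes "finite A"
  shows "rk (clone_E E) A = rk E (fst ` A)"
  using assms by (rule rk_pullback) (simp add: clone_E_pullback)

lemma P_poly_clone:
  fixes u x :: "'r::comm_ring_1"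
  assumes finV: "finite V" and finK: "finite K"
  shows "P_poly (V \<times> K) (clone_E E) u x = P_poly V E u ((1 + x) ^ card K - 1)"
proof -
  have split: "x ^ card A * u ^ rk (clone_E E) A
      = (x ^ card (fst ` A) * u ^ rk E (fst ` A)) * x ^ (card A - card (fst ` A))"
    if "A \<in> Pow (V \<times> K)" for A
  proof -
    have fin: "finite A" using that finV finK finite_subset by blast
    then have "x ^ card A = x ^ card (fst ` A) * x ^ (card A - card (fst ` A))"
      using card_image_le[OF fin, of fst] by (simp flip: power_add)
    then show ?thesis using rk_clone[OF fin] by (simp add: ac_simps)
  qed
  have geom: "x * (\<Sum>i<card K. (1 + x) ^ i) = (1 + x) ^ card K - 1"
    by (simp add: power_diff_1_eq)
  have "P_poly (V \<times> K) (clone_E E) u x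
      = (\<Sum>A\<in>Pow (V \<times> K). (x ^ card (fst ` A) * u ^ rk E (fst ` A)) * x ^ (card A - card (fst ` A)))"
    unfolding P_poly_def using split by (rule sum.cong[OF refl])
  also have "\<dots> = (\<Sum>B\<in>Pow V. (x ^ card B * u ^ rk E B) * (\<Sum>i<card K. (1 + x) ^ i) ^ card B)"
    by (rule sum_Pow_product_by_fst[OF finV finK])
  also have "\<dots> = P_poly V E u ((1 + x) ^ card K - 1)"
    unfolding P_poly_def geom[symmetric] power_mult_distrib by (simp add: ac_simps)
  finally show ?thesis .
qed

(* The second identity: split |A| - rk = (|fst A| - rk) + (|A| - |fst A|) and
   use (y - 1)(1 + ... + y^(|K|-1)) = y^|K| - 1. *)
lemma q_poly_clone:
  fixes x y :: "'r::comm_ring_1"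
  assumes finV: "finite V" and finK: "finite K"
  shows "q_poly (V \<times> K) (clone_E E) x y
       = q_poly V E ((x - 1) * (\<Sum>i<card K. y ^ i) + 1) (y ^ card K)"
proof -
  define s where "s = (\<Sum>i<card K. y ^ i)"
  have split: "(x - 1) ^ rk (clone_E E) A * (y - 1) ^ (card A - rk (clone_E E) A)
      = ((x - 1) ^ rk E (fst ` A) * (y - 1) ^ (card (fst ` A) - rk E (fst ` A)))
        * (y - 1) ^ (card A - card (fst ` A))"
    if "A \<in> Pow (V \<times> K)" for A
  proof -
    have fin: "finite A" using that finV finK finite_subset by blast
    have "rk E (fst ` A) \<le> card (fst ` A)" "card (fst ` A) \<le> card A"
      using rk_le_card[of "fst ` A" E] fin card_image_le[OF fin] by simp_all
    then have "card A - rk E (fst ` A)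
        = (card (fst ` A) - rk E (fst ` A)) + (card A - card (fst ` A))" by linarith
    then show ?thesis using rk_clone[OF fin] by (simp add: power_add ac_simps)
  qed
  have regroup: "((x - 1) ^ rk E B * (y - 1) ^ (card B - rk E B)) * s ^ card B
      = ((x - 1) * s) ^ rk E B * ((y - 1) * s) ^ (card B - rk E B)" if "B \<in> Pow V" for B
  proof -
    have "rk E B \<le> card B" using that finV finite_subset rk_le_card by blast
    then have "s ^ card B = s ^ rk E B * s ^ (card B - rk E B)" by (simp flip: power_add)
    then show ?thesis by (simp add: power_mult_distrib ac_simps)
  qed
  have "q_poly (V \<times> K) (clone_E E) x y
      = (\<Sum>A\<in>Pow (V \<times> K). ((x - 1) ^ rk E (fst ` A) * (y - 1) ^ (card (fst ` A) - rk E (fst ` A)))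
          * (y - 1) ^ (card A - card (fst ` A)))"
    unfolding q_poly_def using split by (rule sum.cong[OF refl])
  also have "\<dots> = (\<Sum>B\<in>Pow V. ((x - 1) ^ rk E B * (y - 1) ^ (card B - rk E B)) * s ^ card B)"
    unfolding s_def using sum_Pow_product_by_fst[OF finV finK,
      where F = "\<lambda>B. (x - 1) ^ rk E B * (y - 1) ^ (card B - rk E B)" and w = "y - 1"] by simp
  also have "\<dots> = (\<Sum>B\<in>Pow V. ((x - 1) * s) ^ rk E B * ((y - 1) * s) ^ (card B - rk E B))"
    using regroup by (rule sum.cong[OF refl])
  also have "\<dots> = q_poly V E ((x - 1) * s + 1) (y ^ card K)"
    unfolding q_poly_def s_def by (simp add: power_diff_1_eq)
  finally show ?thesis unfolding s_def .
qed

(* The theorem is the case K = {1..k}. *)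
theorem mainTheorem4:
  fixes V :: "'a set" and E :: "'a \<Rightarrow> 'a \<Rightarrow> bool" and k :: nat
    and u x y :: "'r::comm_ring_1"
  assumes "graph V E" and "k \<ge> 1"
  shows "P_poly (clone_V V k) (clone_E E) u x = P_poly V E u ((1 + x) ^ k - 1)
       \<and> q_poly (clone_V V k) (clone_E E) x y
           = q_poly V E ((x - 1) * (\<Sum>i<k. y ^ i) + 1) (y ^ k)"
proof -
  have "finite V" using assms(1) by (simp add: graph_def)
  then show ?thesis
    using P_poly_clone[of V "{1..k}" E u x] q_poly_clone[of V "{1..k}" E x y]
    by (simp add: clone_V_def)
qed

end
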